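(* Let $V$ be a finite nonempty set and $f:\{0,1\}^V\to\{0,1\}^V$ an and-net. Every subnetwork of $f$ has at most one fixed point if and only if $f$ has no positive-circular subnetwork.
   Context: For nonempty $I\subseteq V$ and $z\in\{0,1\}^{V\setminus I}$, the subnetwork of $f$ induced by $z$ is $h:\{0,1\}^I\to\{0,1\}^I$ with $h(x|_I)=f(x)|_I$ for all $x$ whose restriction to $V\setminus I$ is $z$ ($f$ is a subnetwork of itself). For a network $g$ on $W$ and $x^{j\alpha}$ the point equal to $x$ except its $j$-component is $\alpha$, the global interaction graph $G(g)$ is the signed digraph on $W$ with a positive (resp. negative) arc from $j$ to $i$ iff $g_i(x^{j1})-g_i(x^{j0})=1$ (resp. $=-1$) for at least one $x$. $f$ is an and-net if $G(f)$ has at most one arc from $j$ to $i$ for all $i,j$ and for every $i$ and $x$: $f_i(x)=1$ iff $G(f)$ has no positive arc $j\to i$ with $x_j=0$ and no negative arc $j\to i$ with $x_j=1$. A cycle is a subgraph with at most one arc between any ordered pair whose underlying unsigned digraph is a directed cycle; positive if it has an even number of negative arcs. $g$ is positive-circular if $G(g)$ itself is a positive cycle through all vertices of $W$. *)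

theory Defs
  imports Main
begin

text \<open>A point of {0,1}^W is a map x :: 'v \<Rightarrow> bool that is False outside W.
  A network on W is a map g on such points; only its values on conf W and
  its components in W matter.\<close>

definition conf :: "'v set \<Rightarrow> ('v \<Rightarrow> bool) set" where
  "conf W = {x. \<forall>j. j \<notin> W \<longrightarrow> x j = False}"

definition pos_arc :: "'v set \<Rightarrow> (('v \<Rightarrow> bool) \<Rightarrow> ('v \<Rightarrow> bool)) \<Rightarrow> 'v \<Rightarrow> 'v \<Rightarrow> bool" where
  "pos_arc W g j i \<longleftrightarrow> j \<in> W \<and> i \<in> W \<and>
     (\<exists>x\<in>conf W. g (x(j := True)) i \<and> \<not> g (x(j := False)) i)"

definition neg_arc :: "'v set \<Rightarrow> (('v \<Rightarrow> bool) \<Rightarrow> ('v \<Rightarrow> bool)) \<Rightarrow> 'v \<Rightarrow> 'v \<Rightarrow> bool" where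
  "neg_arc W g j i \<longleftrightarrow> j \<in> W \<and> i \<in> W \<and>
     (\<exists>x\<in>conf W. \<not> g (x(j := True)) i \<and> g (x(j := False)) i)"

definition and_net :: "'v set \<Rightarrow> (('v \<Rightarrow> bool) \<Rightarrow> ('v \<Rightarrow> bool)) \<Rightarrow> bool" where
  "and_net V f \<longleftrightarrow>
     (\<forall>i\<in>V. \<forall>j\<in>V. \<not> (pos_arc V f j i \<and> neg_arc V f j i)) \<and>
     (\<forall>i\<in>V. \<forall>x\<in>conf V. f x i \<longleftrightarrow>
        (\<forall>j\<in>V. (pos_arc V f j i \<longrightarrow> x j) \<and> (neg_arc V f j i \<longrightarrow> \<not> x j)))"

definition subnet :: "'v set \<Rightarrow> (('v \<Rightarrow> bool) \<Rightarrow> ('v \<Rightarrow> bool)) \<Rightarrow> 'v set \<Rightarrow> ('v \<Rightarrow> bool)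
    \<Rightarrow> (('v \<Rightarrow> bool) \<Rightarrow> ('v \<Rightarrow> bool))" where
  "subnet V f I z = (\<lambda>y i. if i \<in> I then f (\<lambda>j. if j \<in> I then y j else z j) i else False)"

definition at_most_one_fixed_point :: "'v set \<Rightarrow> (('v \<Rightarrow> bool) \<Rightarrow> ('v \<Rightarrow> bool)) \<Rightarrow> bool" where
  "at_most_one_fixed_point W g \<longleftrightarrow>
     (\<forall>x\<in>conf W. \<forall>y\<in>conf W. (\<forall>i\<in>W. g x i = x i) \<longrightarrow> (\<forall>i\<in>W. g y i = y i) \<longrightarrow> x = y)"

definition positive_circular :: "'v set \<Rightarrow> (('v \<Rightarrow> bool) \<Rightarrow> ('v \<Rightarrow> bool)) \<Rightarrow> bool" where
  "positive_circular W g \<longleftrightarrow>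
     (\<forall>j i. \<not> (pos_arc W g j i \<and> neg_arc W g j i)) \<and>
     (\<exists>vs. vs \<noteq> [] \<and> distinct vs \<and> set vs = W \<and>
        {(j, i). pos_arc W g j i \<or> neg_arc W g j i} =
        {(vs ! k, vs ! (Suc k mod length vs)) | k. k < length vs}) \<and>
     even (card {(j, i). neg_arc W g j i})"

end

theory Submission
  imports Defs
begin

text \<open>A network whose interaction graph is a single positive cycle has two complementary
  fixed points: walking once around the cycle, each vertex copies or negates its predecessor, and
  the even number of negations makes the walk consistent when it closes.

  Conversely, two distinct fixed points of a subnetwork give configurations P, Q that agree
  outside a set I of vertices and are both fixed by f on I. Take such a pair with I minimal; then
  P and Q are complementary on I. Record a configuration W agreeing with P outside I by the set
  S of vertices of I where W agrees with P: since f is an and-net, W is fixed at i iff i \<in> S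
  exactly when all regulators of i lie in S (if P i) or some regulator of i lies in S (if not P i).
  If the closure of a single vertex w under this rule is not all of I, it yields a fixed pair on
  I - {w}; so by minimality every closure, for P and for Q, is all of I. A vertex reached last
  by the closure from w then shows that w has a unique regulator in I, so the subnetwork on I
  obtained by fixing P outside I is a cycle in which every vertex copies its regulator up to the
  sign P (p i) = P i. These signs multiply to 1, so the cycle is positive.\<close>

lemma conf_fun_upd: "x \<in> conf I \<Longrightarrow> j \<in> I \<Longrightarrow> x(j := b) \<in> conf I"
  unfolding conf_def by auto

lemma value_fun_upd_if_no_arc:
  assumes "j \<in> I" "i \<in> I" "\<not> pos_arc I h j i" "\<not> neg_arc I h j i" "x \<in> conf I"
  shows "h (x(j := b)) i = h x i"
proof -
  have "h (x(j := True)) i = h (x(j := False)) i"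
    using assms unfolding pos_arc_def neg_arc_def by blast
  moreover have "x = x(j := x j)" by simp
  ultimately show ?thesis by (cases b; cases "x j") (metis (full_types))+
qed

lemma value_eq_if_no_arcs_from:
  assumes "finite D" "D \<subseteq> I" "i \<in> I"
    and no_arc: "\<forall>j\<in>D. \<not> pos_arc I h j i \<and> \<not> neg_arc I h j i"
    and "y \<in> conf I" "y' \<in> conf I" "\<forall>j. j \<notin> D \<longrightarrow> y j = y' j"
  shows "h y i = h y' i"
  using assms(1,2,6,7) no_arc
proof (induction D arbitrary: y' rule: finite_induct)
  case empty
  then have "y = y'" by auto
  then show ?case by simp
next
  case (insert d D)
  have d: "d \<in> I" "\<not> pos_arc I h d i" "\<not> neg_arc I h d i" using insert.prems by auto
  have "h y i = h (y'(d := y d)) i"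
    using insert conf_fun_upd[OF \<open>y' \<in> conf I\<close> d(1)] by auto
  also have "\<dots> = h y' i"
    using value_fun_upd_if_no_arc[OF d(1) \<open>i \<in> I\<close> d(2,3) \<open>y' \<in> conf I\<close>] .
  finally show ?case .
qed

lemma value_of_unique_regulator:
  assumes "finite I" "i \<in> I" "q \<in> I"
    and only_q: "\<forall>j\<in>I. j \<noteq> q \<longrightarrow> \<not> pos_arc I h j i \<and> \<not> neg_arc I h j i"
    and arc: "pos_arc I h q i \<or> neg_arc I h q i" "\<not> (pos_arc I h q i \<and> neg_arc I h q i)"
    and "y \<in> conf I"
  shows "h y i = (y q = pos_arc I h q i)"
proof -
  have from_q: "h y i = h (x(q := y q)) i" if "x \<in> conf I" for x
    using assms(1-4) \<open>y \<in> conf I\<close> that conf_fun_upd[OF that \<open>q \<in> I\<close>]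
    by (intro value_eq_if_no_arcs_from[of "I - {q}" I i h]) (auto simp: conf_def)
  show ?thesis
  proof (cases "pos_arc I h q i")
    case True
    then obtain x where "x \<in> conf I" "h (x(q := True)) i" "\<not> h (x(q := False)) i"
      unfolding pos_arc_def by blast
    then show ?thesis using from_q True by (cases "y q") auto
  next
    case False
    then obtain x where "x \<in> conf I" "\<not> h (x(q := True)) i" "h (x(q := False)) i"
      using arc unfolding neg_arc_def by blast
    then show ?thesis using from_q False by (cases "y q") auto
  qed
qed

lemma cyclic_predecessor:
  assumes "vs \<noteq> []" "i \<in> set vs"
  obtains k where "k < length vs" "vs ! (Suc k mod length vs) = i"
proof -
  obtain m where m: "m < length vs" "vs ! m = i" using assms(2) by (metis in_set_conv_nth)
  define k where "k = (if m = 0 then length vs - 1 else m - 1)"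
  have "k < length vs" "Suc k mod length vs = m" using m(1) assms(1) unfolding k_def by auto
  then show ?thesis using that m(2) by metis
qed

locale signed_cycle =
  fixes vs :: "'v list" and h :: "('v \<Rightarrow> bool) \<Rightarrow> ('v \<Rightarrow> bool)" and \<sigma> :: "nat \<Rightarrow> bool"
  assumes distinct: "distinct vs" and nonempty: "vs \<noteq> []"
    and step: "\<And>y k. y \<in> conf (set vs) \<Longrightarrow> k < length vs \<Longrightarrow>
      h y (vs ! (Suc k mod length vs)) = (y (vs ! k) = \<sigma> k)"
begin

lemma complement_fixed_point:
  assumes "y \<in> conf (set vs)" "\<forall>i\<in>set vs. h y i = y i"
  defines "y' \<equiv> \<lambda>v. v \<in> set vs \<and> \<not> y v"
  shows "y' \<in> conf (set vs)" "\<forall>i\<in>set vs. h y' i = y' i"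
proof -
  show y': "y' \<in> conf (set vs)" unfolding y'_def conf_def by simp
  show "\<forall>i\<in>set vs. h y' i = y' i"
  proof
    fix i assume i: "i \<in> set vs"
    then obtain k where k: "k < length vs" "vs ! (Suc k mod length vs) = i"
      using cyclic_predecessor[OF nonempty] by blast
    have "vs ! k \<in> set vs" using k(1) by simp
    then have "h y' i = (\<not> h y i)" using step[OF y' k(1)] step[OF assms(1) k(1)] k(2)
      unfolding y'_def by auto
    then show "h y' i = y' i" using assms(2) i unfolding y'_def by simp
  qed
qed

lemma fixed_point_if_even:
  assumes "even (card {k. k < length vs \<and> \<not> \<sigma> k})"
  obtains y where "y \<in> conf (set vs)" "\<forall>i\<in>set vs. h y i = y i"
proof -
  let ?n = "length vs"
  \<comment> \<open>the value forced at vs ! k by starting with True at vs ! 0\<close>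
  define Y where "Y k = even (card {m. m < k \<and> \<not> \<sigma> m})" for k
  have Y_Suc: "Y (Suc k) = (Y k = \<sigma> k)" for k
  proof -
    have "{m. m < Suc k \<and> \<not> \<sigma> m} =
        (if \<sigma> k then {m. m < k \<and> \<not> \<sigma> m} else insert k {m. m < k \<and> \<not> \<sigma> m})"
      by (auto simp: less_Suc_eq)
    then show ?thesis unfolding Y_def by auto
  qed
  have Y_wrap: "Y ?n = Y 0" using assms unfolding Y_def by simp
  define y where "y v = (\<exists>k<?n. vs ! k = v \<and> Y k)" for v
  have y_conf: "y \<in> conf (set vs)" unfolding conf_def y_def by auto
  have y_nth: "y (vs ! k) = Y k" if "k < ?n" for k
    unfolding y_def using that nth_eq_iff_index_eq[OF distinct] by auto
  have "h y i = y i" if i: "i \<in> set vs" for i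
  proof -
    obtain k where k: "k < ?n" "vs ! (Suc k mod ?n) = i"
      using cyclic_predecessor[OF nonempty i] by blast
    have "h y i = Y (Suc k)" using step[OF y_conf k(1)] k(2) y_nth[OF k(1)] Y_Suc by simp
    also have "\<dots> = Y (Suc k mod ?n)" using k(1) Y_wrap by (cases "Suc k = ?n") auto
    finally show ?thesis using y_nth[of "Suc k mod ?n"] k nonempty by simp
  qed
  then show ?thesis using that y_conf by blast
qed

lemma not_unique_fixed_point_if_even:
  assumes "even (card {k. k < length vs \<and> \<not> \<sigma> k})"
  shows "\<not> at_most_one_fixed_point (set vs) h"
proof -
  obtain y where y: "y \<in> conf (set vs)" "\<forall>i\<in>set vs. h y i = y i"
    using fixed_point_if_even[OF assms] .
  let ?y' = "\<lambda>v. v \<in> set vs \<and> \<not> y v"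
  have y': "?y' \<in> conf (set vs)" "\<forall>i\<in>set vs. h ?y' i = ?y' i"
    using complement_fixed_point[OF y] by simp_all
  show ?thesis
  proof
    assume "at_most_one_fixed_point (set vs) h"
    then have "y = ?y'" using y y' unfolding at_most_one_fixed_point_def by blast
    then show False using nonempty by (metis list.set_sel(1))
  qed
qed

end

lemma distinct_cyclic_successor_inj:
  assumes "distinct vs" "k < length vs" "k' < length vs"
    and "vs ! (Suc k mod length vs) = vs ! (Suc k' mod length vs)"
  shows "k = k'"
proof -
  have "Suc k mod length vs = Suc k' mod length vs"
    using nth_eq_iff_index_eq[OF assms(1), of "Suc k mod length vs" "Suc k' mod length vs"]
      assms(2-4)
    by (metis length_pos_if_in_set mod_less_divisor nth_mem)
  then show ?thesis using assms(2,3) by (cases "Suc k = length vs"; cases "Suc k' = length vs") auto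
qed

lemma positive_circular_signed_cycle:
  assumes fin: "finite I" and pc: "positive_circular I h"
  obtains vs \<sigma> where "signed_cycle vs h \<sigma>" "set vs = I"
    "even (card {k. k < length vs \<and> \<not> \<sigma> k})"
proof -
  obtain vs where vs: "vs \<noteq> []" "distinct vs" "set vs = I"
      "{(j, i). pos_arc I h j i \<or> neg_arc I h j i} =
       {(vs ! k, vs ! (Suc k mod length vs)) | k. k < length vs}"
    and single_sign: "\<forall>j i. \<not> (pos_arc I h j i \<and> neg_arc I h j i)"
    and even_neg: "even (card {(j, i). neg_arc I h j i})"
    using pc unfolding positive_circular_def by blast
  let ?n = "length vs"
  define e where "e k = (vs ! k, vs ! (Suc k mod ?n))" for k
  define \<sigma> where "\<sigma> k = pos_arc I h (vs ! k) (vs ! (Suc k mod ?n))" for k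
  have arc_iff: "pos_arc I h j i \<or> neg_arc I h j i \<longleftrightarrow> (\<exists>k<?n. (j, i) = e k)" for j i
    using vs(4) unfolding e_def by blast
  have e_inj: "inj_on e {..<?n}"
    by (rule inj_onI) (auto simp: e_def nth_eq_iff_index_eq[OF vs(2)])
  have in_I: "vs ! k \<in> I" "vs ! (Suc k mod ?n) \<in> I" if "k < ?n" for k
    using that vs(1,3) by auto
  have step: "h y (vs ! (Suc k mod ?n)) = (y (vs ! k) = \<sigma> k)"
    if y: "y \<in> conf (set vs)" and k: "k < ?n" for y k
  proof -
    let ?i = "vs ! (Suc k mod ?n)"
    have only_k: "\<forall>j\<in>I. j \<noteq> vs ! k \<longrightarrow> \<not> pos_arc I h j ?i \<and> \<not> neg_arc I h j ?i"
    proof (intro ballI impI)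
      fix j assume "j \<in> I" "j \<noteq> vs ! k"
      have "\<not> (pos_arc I h j ?i \<or> neg_arc I h j ?i)"
      proof
        assume "pos_arc I h j ?i \<or> neg_arc I h j ?i"
        then obtain k' where k': "k' < ?n" "(j, ?i) = e k'" using arc_iff by blast
        then have "k' = k"
          using distinct_cyclic_successor_inj[OF vs(2) k'(1) k] unfolding e_def by simp
        then show False using k' \<open>j \<noteq> vs ! k\<close> unfolding e_def by simp
      qed
      then show "\<not> pos_arc I h j ?i \<and> \<not> neg_arc I h j ?i" by simp
    qed
    have "pos_arc I h (vs ! k) ?i \<or> neg_arc I h (vs ! k) ?i"
      using arc_iff k unfolding e_def by blast
    then show ?thesis
      using value_of_unique_regulator[OF fin in_I(2)[OF k] in_I(1)[OF k] only_k] single_sign y vs(3)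
      unfolding \<sigma>_def by blast
  qed
  have "signed_cycle vs h \<sigma>" using vs(1,2) step by unfold_locales
  moreover have "card {k. k < ?n \<and> \<not> \<sigma> k} = card {(j, i). neg_arc I h j i}"
  proof -
    have "{(j, i). neg_arc I h j i} = e ` {k. k < ?n \<and> \<not> \<sigma> k}"
      using arc_iff single_sign unfolding \<sigma>_def e_def by fastforce
    moreover have "inj_on e {k. k < ?n \<and> \<not> \<sigma> k}"
      using e_inj by (rule inj_on_subset) auto
    ultimately show ?thesis by (simp add: card_image)
  qed
  ultimately show ?thesis using that vs(3) even_neg by simp
qed

lemma positive_circular_not_unique_fixed_point:
  assumes "finite I" "positive_circular I h"
  shows "\<not> at_most_one_fixed_point I h"
proof -
  obtain vs \<sigma> where "signed_cycle vs h \<sigma>" "set vs = I" "even (card {k. k < length vs \<and> \<not> \<sigma> k})"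
    using positive_circular_signed_cycle[OF assms] .
  then show ?thesis using signed_cycle.not_unique_fixed_point_if_even by blast
qed

definition activated :: "('v \<Rightarrow> 'v set) \<Rightarrow> ('v \<Rightarrow> bool) \<Rightarrow> 'v set \<Rightarrow> 'v \<Rightarrow> bool" where
  "activated N P S i \<longleftrightarrow> (if P i then N i \<subseteq> S else N i \<inter> S \<noteq> {})"

fun spread_steps :: "('v \<Rightarrow> 'v set) \<Rightarrow> 'v set \<Rightarrow> ('v \<Rightarrow> bool) \<Rightarrow> 'v \<Rightarrow> nat \<Rightarrow> 'v set" where
  "spread_steps N I P w 0 = {w}"
| "spread_steps N I P w (Suc k) =
     spread_steps N I P w k \<union> {i \<in> I. activated N P (spread_steps N I P w k) i}"

definition spread :: "('v \<Rightarrow> 'v set) \<Rightarrow> 'v set \<Rightarrow> ('v \<Rightarrow> bool) \<Rightarrow> 'v \<Rightarrow> 'v set" where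
  "spread N I P w = (\<Union>k. spread_steps N I P w k)"

lemma activated_mono: "S \<subseteq> T \<Longrightarrow> activated N P S i \<Longrightarrow> activated N P T i"
  unfolding activated_def by (auto split: if_splits)

lemma spread_steps_mono: "k \<le> m \<Longrightarrow> spread_steps N I P w k \<subseteq> spread_steps N I P w m"
  by (induction m) (auto simp: le_Suc_eq)

lemma spread_steps_subset: "w \<in> I \<Longrightarrow> spread_steps N I P w k \<subseteq> I"
  by (induction k) auto

lemma spread_subset: "w \<in> I \<Longrightarrow> spread N I P w \<subseteq> I"
  unfolding spread_def using spread_steps_subset[of w I N P] by (simp add: UN_least)

lemma start_in_spread: "w \<in> spread N I P w"
  unfolding spread_def using spread_steps.simps(1)[of N I P w] by blast

lemma spread_steps_subset_spread: "spread_steps N I P w k \<subseteq> spread N I P w"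
  unfolding spread_def by (rule UN_upper) (rule UNIV_I)

lemma finite_subset_spread_steps:
  assumes "finite A" "A \<subseteq> spread N I P w"
  obtains k where "A \<subseteq> spread_steps N I P w k"
  using assms
proof (induction A arbitrary: thesis rule: finite_induct)
  case (insert a A)
  obtain k where k: "A \<subseteq> spread_steps N I P w k" using insert by auto
  obtain k' where k': "a \<in> spread_steps N I P w k'" using insert.prems unfolding spread_def by auto
  have "insert a A \<subseteq> spread_steps N I P w (max k k')"
    using k k' spread_steps_mono[of k "max k k'" N I P w] spread_steps_mono[of k' "max k k'" N I P w]
    by auto
  then show ?case using insert.prems by blast
qed simp

lemma spread_closed:
  assumes "finite (N i)" "i \<in> I" "activated N P (spread N I P w) i"
  shows "i \<in> spread N I P w"
proof -
  obtain k where "activated N P (spread_steps N I P w k) i"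
  proof (cases "P i")
    case True
    then have "N i \<subseteq> spread N I P w" using assms(3) by (simp add: activated_def)
    then obtain k where "N i \<subseteq> spread_steps N I P w k"
      using finite_subset_spread_steps[OF assms(1)] by blast
    then show ?thesis using that True by (simp add: activated_def)
  next
    case False
    then obtain j where j: "j \<in> N i" "j \<in> spread N I P w"
      using assms(3) unfolding activated_def by auto
    then obtain k where "j \<in> spread_steps N I P w k" unfolding spread_def by blast
    then show ?thesis using that False j(1) unfolding activated_def by auto
  qed
  then have "i \<in> spread_steps N I P w (Suc k)" using assms(2) by simp
  then show ?thesis using spread_steps_subset_spread[of N I P w "Suc k"] by blast
qed

lemma spread_activated:
  assumes "i \<in> spread N I P w" "i \<noteq> w"
  shows "activated N P (spread N I P w) i"
proof -
  obtain k where "i \<in> spread_steps N I P w k" using assms(1) unfolding spread_def by auto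
  then show ?thesis
  proof (induction k)
    case (Suc k)
    then show ?case using activated_mono[OF spread_steps_subset_spread] by auto
  qed (use assms(2) in simp)
qed

lemma spread_eq_singleton_if_stalled:
  assumes "spread_steps N I P w (Suc 0) = {w}"
  shows "spread N I P w = {w}"
proof -
  have "spread_steps N I P w k = {w}" for k using assms by (induction k) auto
  then show ?thesis unfolding spread_def by simp
qed

text \<open>l is a vertex reached in the last step of the spread from w, so every other vertex was
  activated by a set not containing l.\<close>

lemma spread_last_vertex:
  assumes fin: "finite I" and full: "spread N I P w = I" and v0: "v0 \<in> I" "v0 \<noteq> w"
  obtains l where "l \<in> I" "l \<noteq> w"
    "\<And>v. v \<in> I \<Longrightarrow> v \<noteq> w \<Longrightarrow> l \<in> N v \<Longrightarrow> \<not> P v \<and> (\<exists>j\<in>N v. j \<noteq> l)"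
proof -
  define t where "t v = (LEAST k. v \<in> spread_steps N I P w k)" for v
  have t: "v \<in> spread_steps N I P w (t v)" if "v \<in> I" for v
    using that full LeastI_ex[of "\<lambda>k. v \<in> spread_steps N I P w k"] unfolding t_def spread_def
      by blast
  have before_t: "v \<notin> spread_steps N I P w k" if "k < t v" for v k
    using that not_less_Least unfolding t_def by blast
  have "t w = 0" unfolding t_def by simp
  have "Max (t ` I) \<in> t ` I" using fin v0(1) by (intro Max_in) auto
  then obtain l where "l \<in> I" "t l = Max (t ` I)" by auto
  then have l: "l \<in> I" "\<forall>v\<in>I. t v \<le> t l" using fin by simp_all
  have earlier: "\<exists>S. l \<notin> S \<and> activated N P S v" if v: "v \<in> I" "v \<noteq> w" for v
  proof (intro exI conjI)
    have "0 < t v" using t[OF v(1)] v(2) by (cases "t v") auto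
    then have "t v - 1 < t l" using l(2) v(1) by fastforce
    then show "l \<notin> spread_steps N I P w (t v - 1)" by (rule before_t)
    have "v \<notin> spread_steps N I P w (t v - 1)" using before_t \<open>0 < t v\<close> by simp
    then show "activated N P (spread_steps N I P w (t v - 1)) v"
      using t[OF v(1)] \<open>0 < t v\<close> by (cases "t v") auto
  qed
  show ?thesis
  proof
    show "l \<in> I" by (fact l(1))
    show "l \<noteq> w"
      using l(2) v0 t[OF v0(1)] \<open>t w = 0\<close> by (metis le_zero_eq spread_steps.simps(1) singletonD)
    fix v assume v: "v \<in> I" "v \<noteq> w" "l \<in> N v"
    then obtain S where "l \<notin> S" "activated N P S v" using earlier by blast
    then show "\<not> P v \<and> (\<exists>j\<in>N v. j \<noteq> l)"
      using v(3) unfolding activated_def by (auto split: if_splits)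
  qed
qed

lemma single_regulator_if_spreads_full:
  assumes fin: "finite I" and N: "\<forall>i\<in>I. N i \<subseteq> I \<and> N i \<noteq> {}"
    and comp: "\<forall>i\<in>I. Q i = (\<not> P i)" and w: "w \<in> I" "\<not> P w"
    and full_P: "spread N I P w = I" and full_Q: "\<forall>l\<in>I. spread N I Q l = I"
  shows "\<exists>l. N w = {l}"
proof (cases "I = {w}")
  case True
  then show ?thesis using N w(1) by (metis subset_singletonD)
next
  case False
  then obtain v0 where v0: "v0 \<in> I" "v0 \<noteq> w" using w(1) by blast
  obtain l where l: "l \<in> I" "l \<noteq> w"
    and last: "\<And>v. v \<in> I \<Longrightarrow> v \<noteq> w \<Longrightarrow> l \<in> N v \<Longrightarrow> \<not> P v \<and> (\<exists>j\<in>N v. j \<noteq> l)"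
    using spread_last_vertex[OF fin full_P v0] by blast
  \<comment> \<open>The Q-spread from l activates some v from {l} alone; only v = w can do so.\<close>
  have "spread_steps N I Q l (Suc 0) \<noteq> {l}"
    using spread_eq_singleton_if_stalled[of N I Q l] full_Q l(1,2) w(1) by auto
  then obtain v where v: "v \<in> I" "v \<noteq> l" "activated N Q {l} v" by auto
  have and_node: "N v \<subseteq> {l}" if "Q v"
    using v(3) that unfolding activated_def by simp
  have "l \<in> N v"
    using v N and_node unfolding activated_def by (cases "Q v") auto
  then have "v = w" using last[OF v(1)] and_node comp v(1) by blast
  then have "N w \<subseteq> {l}" using and_node comp w by simp
  then show ?thesis using \<open>l \<in> N v\<close> \<open>v = w\<close> by blast
qed

lemma spread_reached_by_iteration:
  assumes single: "\<forall>i\<in>I. N i = {p i}" and "v \<in> spread N I P w"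
  shows "\<exists>m. (p ^^ m) v = w"
proof -
  obtain k where "v \<in> spread_steps N I P w k" using assms(2) unfolding spread_def by blast
  then show ?thesis
  proof (induction k arbitrary: v)
    case (Suc k)
    show ?case
    proof (cases "v \<in> spread_steps N I P w k")
      case False
      then have "v \<in> I" and "activated N P (spread_steps N I P w k) v" using Suc.prems by auto
      moreover have "N v = {p v}" using single \<open>v \<in> I\<close> by blast
      ultimately have "p v \<in> spread_steps N I P w k" unfolding activated_def
        by (auto split: if_splits)
      then obtain m where "(p ^^ m) (p v) = w" using Suc.IH by blast
      then have "(p ^^ Suc m) v = w" by (simp add: funpow_swap1)
      then show ?thesis by blast
    qed (use Suc.IH in blast)
  qed (auto intro: exI[of _ 0])
qed

lemma funpow_orbit_enumerates:
  assumes w0: "w0 \<in> I" and maps: "\<forall>i\<in>I. p i \<in> I"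
    and reach: "\<forall>v\<in>I. \<forall>w\<in>I. \<exists>m. (p ^^ m) v = w"
  defines "orb \<equiv> \<lambda>k. (p ^^ k) w0"
  obtains n where "0 < n" "orb n = w0" "inj_on orb {..<n}" "orb ` {..<n} = I"
proof -
  have orb_add: "orb (k + j) = (p ^^ k) (orb j)" for k j
    unfolding orb_def by (simp add: funpow_add)
  have "\<exists>d. 0 < d \<and> orb d = w0"
  proof -
    obtain m where "(p ^^ m) (p w0) = w0" using reach maps w0 by blast
    then have "orb (Suc m) = w0" unfolding orb_def by (simp add: funpow_swap1)
    then show ?thesis by blast
  qed
  define n where "n = (LEAST d. 0 < d \<and> orb d = w0)"
  have n: "0 < n" "orb n = w0" using LeastI_ex[OF \<open>\<exists>d. 0 < d \<and> orb d = w0\<close>] unfolding n_def by auto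
  have minimal: "\<not> (0 < d \<and> orb d = w0)" if "d < n" for d
    using not_less_Least[OF that[unfolded n_def]] .
  have "inj_on orb {..<n}"
  proof (rule linorder_inj_onI')
    fix a b assume ab: "a \<in> {..<n}" "b \<in> {..<n}" "a < b"
    show "orb a \<noteq> orb b"
    proof
      assume "orb a = orb b"
      then have "orb ((n - b) + a) = w0"
        using orb_add[of "n - b" a] orb_add[of "n - b" b] n(2) ab(2) by simp
      moreover have "0 < n - b + a" "n - b + a < n" using ab by auto
      ultimately show False using minimal by blast
    qed
  qed
  moreover have "orb ` {..<n} = I"
  proof
    have "orb k \<in> I" for k unfolding orb_def using w0 maps by (induction k) auto
    then show "orb ` {..<n} \<subseteq> I" by blast
    show "I \<subseteq> orb ` {..<n}"
    proof
      fix v assume "v \<in> I"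
      then obtain m where "orb m = v" using reach w0 unfolding orb_def by blast
      moreover have "orb (m mod n) = orb m" using n(2) unfolding orb_def by (rule funpow_mod_eq)
      ultimately show "v \<in> orb ` {..<n}" using n(1) by (metis imageI lessThan_iff mod_less_divisor)
    qed
  qed
  ultimately show ?thesis using that n by blast
qed

lemma funpow_orbit_cycle_list:
  assumes w0: "w0 \<in> I" and maps: "\<forall>i\<in>I. p i \<in> I"
    and reach: "\<forall>v\<in>I. \<forall>w\<in>I. \<exists>m. (p ^^ m) v = w"
  obtains vs where "distinct vs" "vs \<noteq> []" "set vs = I"
    "\<And>k. k < length vs \<Longrightarrow> p (vs ! (Suc k mod length vs)) = vs ! k"
proof -
  define orb where "orb k = (p ^^ k) w0" for k
  obtain n where n: "0 < n" "orb n = w0" "inj_on orb {..<n}" "orb ` {..<n} = I"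
    using funpow_orbit_enumerates[OF assms] unfolding orb_def by blast
  \<comment> \<open>reversed, so that p maps each entry to the previous one\<close>
  define vs where "vs = rev (map orb [0..<n])"
  have len: "length vs = n" unfolding vs_def by simp
  have nth: "vs ! k = orb (n - Suc k)" if "k < n" for k
    unfolding vs_def using that by (simp add: rev_nth)
  have "distinct vs" unfolding vs_def using n(3) by (simp add: distinct_map atLeast_upt)
  moreover have "set vs = I" unfolding vs_def using n(4) by (simp add: atLeast_upt)
  moreover have "p (vs ! (Suc k mod n)) = vs ! k" if "k < n" for k
  proof (cases "Suc k < n")
    case True
    then have "n - Suc k = Suc (n - Suc (Suc k))" by simp
    then show ?thesis using nth that True unfolding orb_def by simp
  next
    case False
    then have "Suc k = n" using that by simp
    moreover have "(p ^^ n) w0 = p ((p ^^ (n - 1)) w0)"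
      using n(1) by (metis Suc_diff_1 funpow.simps(2) o_apply)
    ultimately show ?thesis using nth n(1,2) that unfolding orb_def by simp
  qed
  ultimately show ?thesis using that len n(1) by auto
qed

definition regulators :: "'v set \<Rightarrow> (('v \<Rightarrow> bool) \<Rightarrow> ('v \<Rightarrow> bool)) \<Rightarrow> 'v set \<Rightarrow> 'v \<Rightarrow> 'v set" where
  "regulators V f I i = {j \<in> I. pos_arc V f j i \<or> neg_arc V f j i}"

definition fixed_pair :: "'v set \<Rightarrow> (('v \<Rightarrow> bool) \<Rightarrow> ('v \<Rightarrow> bool)) \<Rightarrow> 'v set \<Rightarrow>
    ('v \<Rightarrow> bool) \<Rightarrow> ('v \<Rightarrow> bool) \<Rightarrow> bool" where
  "fixed_pair V f I P Q \<longleftrightarrow> I \<subseteq> V \<and> P \<in> conf V \<and> Q \<in> conf V \<and> (\<forall>j. j \<notin> I \<longrightarrow> P j = Q j) \<and>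
     (\<forall>i\<in>I. f P i = P i \<and> f Q i = Q i)"

lemma fixed_pair_sym: "fixed_pair V f I P Q \<Longrightarrow> fixed_pair V f I Q P"
  unfolding fixed_pair_def by auto

lemma regulators_subset: "regulators V f I i \<subseteq> I"
  unfolding regulators_def by auto

lemma and_net_value_if_agree_off:
  assumes an: "and_net V f" and "i \<in> I" "I \<subseteq> V"
    and R: "R \<in> conf V" "f R i"
    and W: "W \<in> conf V" "\<forall>j. j \<notin> I \<longrightarrow> W j = R j"
  shows "f W i \<longleftrightarrow> (\<forall>j\<in>regulators V f I i. W j = R j)"
proof -
  have i: "i \<in> V" using assms(2,3) by auto
  have and_rule: "f X i \<longleftrightarrow> (\<forall>j\<in>V. (pos_arc V f j i \<longrightarrow> X j) \<and> (neg_arc V f j i \<longrightarrow> \<not> X j))"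
    if "X \<in> conf V" for X
    using an i that unfolding and_net_def by simp
  have single_sign: "\<forall>j\<in>V. \<not> (pos_arc V f j i \<and> neg_arc V f j i)"
    using an i unfolding and_net_def by blast
  have "\<forall>j\<in>V. (pos_arc V f j i \<longrightarrow> R j) \<and> (neg_arc V f j i \<longrightarrow> \<not> R j)"
    using and_rule[OF R(1)] R(2) by blast
  then show ?thesis
    unfolding and_rule[OF W(1)] regulators_def using single_sign W(2) assms(3) by blast
qed

lemma fixed_pair_value:
  assumes an: "and_net V f" and pair: "fixed_pair V f I P Q" and comp: "\<forall>i\<in>I. Q i = (\<not> P i)"
    and "i \<in> I" and W: "W \<in> conf V" "\<forall>j. j \<notin> I \<longrightarrow> W j = P j"
  shows "f W i \<longleftrightarrow> (if P i then \<forall>j\<in>regulators V f I i. W j = P j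
                              else \<forall>j\<in>regulators V f I i. W j \<noteq> P j)"
proof (cases "P i")
  case True
  then have "f P i" using pair \<open>i \<in> I\<close> unfolding fixed_pair_def by auto
  then show ?thesis
    using and_net_value_if_agree_off[OF an \<open>i \<in> I\<close> _ _ _ W] pair True unfolding fixed_pair_def
      by auto
next
  case False
  then have "f Q i" using pair \<open>i \<in> I\<close> comp unfolding fixed_pair_def by auto
  moreover have "\<forall>j. j \<notin> I \<longrightarrow> W j = Q j" using W(2) pair unfolding fixed_pair_def by auto
  ultimately have "f W i \<longleftrightarrow> (\<forall>j\<in>regulators V f I i. W j = Q j)"
    using and_net_value_if_agree_off[OF an \<open>i \<in> I\<close> _ _ _ W(1)] pair unfolding fixed_pair_def
      by blast
  then show ?thesis using False comp regulators_subset[of V f I i] by auto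
qed

lemma regulators_nonempty:
  assumes an: "and_net V f" and pair: "fixed_pair V f I P Q" and comp: "\<forall>i\<in>I. Q i = (\<not> P i)"
    and i: "i \<in> I"
  shows "regulators V f I i \<noteq> {}"
proof
  assume none: "regulators V f I i = {}"
  have P: "P \<in> conf V" and Q: "Q \<in> conf V" "\<forall>j. j \<notin> I \<longrightarrow> Q j = P j"
    and fixed: "f P i = P i" "f Q i = Q i"
    using pair i unfolding fixed_pair_def by auto
  show False
  proof (cases "P i")
    case True
    then show False using fixed_pair_value[OF an pair comp i Q] none fixed(2) comp i by simp
  next
    case False
    then show False using fixed_pair_value[OF an pair comp i P] none fixed(1) by simp
  qed
qed

lemma fixed_pair_shrink:
  assumes an: "and_net V f" and pair: "fixed_pair V f I P Q" and comp: "\<forall>i\<in>I. Q i = (\<not> P i)"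
    and fin: "finite I" and w: "w \<in> I" and partial: "spread (regulators V f I) I P w \<noteq> I"
  obtains W where "fixed_pair V f (I - {w}) P W" "P \<noteq> W"
proof -
  let ?N = "regulators V f I"
  define S where "S = spread ?N I P w"
  obtain i0 where i0: "i0 \<in> I" "i0 \<notin> S" using spread_subset[OF w] partial unfolding S_def by blast
  define W where "W j = (if j \<in> I \<and> j \<notin> S then Q j else P j)" for j
  have W_conf: "W \<in> conf V" and W_off: "\<forall>j. j \<notin> I \<longrightarrow> W j = P j"
    using pair unfolding W_def fixed_pair_def conf_def by auto
  have W_eq_P: "W j = P j \<longleftrightarrow> j \<in> S" if "j \<in> I" for j
    using that comp unfolding W_def by auto
  have "f W i = W i" if i: "i \<in> I" "i \<noteq> w" for i
  proof -
    have agree: "(\<forall>j\<in>?N i. W j = P j) \<longleftrightarrow> ?N i \<subseteq> S"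
      and disagree: "(\<forall>j\<in>?N i. W j \<noteq> P j) \<longleftrightarrow> ?N i \<inter> S = {}"
      using W_eq_P regulators_subset[of V f I i] by blast+
    have "f W i \<longleftrightarrow> (if P i then ?N i \<subseteq> S else ?N i \<inter> S = {})"
      using fixed_pair_value[OF an pair comp i(1) W_conf W_off] by (simp only: agree disagree)
    moreover have "activated ?N P S i \<longleftrightarrow> i \<in> S"
    proof
      have "finite (?N i)" using finite_subset[OF regulators_subset fin] .
      then show "i \<in> S" if "activated ?N P S i"
        using that unfolding S_def by (rule spread_closed[OF _ i(1)])
      show "activated ?N P S i" if "i \<in> S"
        using that unfolding S_def by (rule spread_activated) (rule i(2))
    qed
    ultimately show ?thesis using W_eq_P[OF i(1)] comp i(1) unfolding activated_def
      by (cases "P i") auto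
  qed
  then have "fixed_pair V f (I - {w}) P W"
    using pair W_conf W_off W_eq_P[OF w] start_in_spread[of w ?N I P] unfolding fixed_pair_def S_def
    by (auto 0 3)
  moreover have "P \<noteq> W" using W_eq_P[OF i0(1)] i0(2) by auto
  ultimately show ?thesis using that by blast
qed

lemma arcs_of_copy_network:
  assumes maps: "\<forall>i\<in>I. p i \<in> I"
    and copies: "\<And>y i. y \<in> conf I \<Longrightarrow> i \<in> I \<Longrightarrow> h y i = (y (p i) = s i)"
  shows "pos_arc I h j i \<longleftrightarrow> i \<in> I \<and> j = p i \<and> s i"
    and "neg_arc I h j i \<longleftrightarrow> i \<in> I \<and> j = p i \<and> \<not> s i"
proof -
  have upd: "h (x(j := b)) i = (if j = p i then b = s i else x (p i) = s i)"
    if "x \<in> conf I" "j \<in> I" "i \<in> I" for x b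
    using copies[OF conf_fun_upd[OF that(1,2)] that(3)] by simp
  have empty: "(\<lambda>_. False) \<in> conf I" unfolding conf_def by simp
  show "pos_arc I h j i \<longleftrightarrow> i \<in> I \<and> j = p i \<and> s i"
    unfolding pos_arc_def using upd empty maps by (auto split: if_splits)
  show "neg_arc I h j i \<longleftrightarrow> i \<in> I \<and> j = p i \<and> \<not> s i"
    unfolding neg_arc_def using upd empty maps by (auto split: if_splits)
qed

lemma even_card_sign_changes:
  fixes P :: "'a \<Rightarrow> bool"
  assumes fin: "finite I" and bij: "bij_betw p I I"
  shows "even (card {i \<in> I. P (p i) \<noteq> P i})"
proof -
  have "(\<Sum>i\<in>I. of_bool (P (p i)) :: nat) = (\<Sum>i\<in>I. of_bool (P i))"
    using sum.reindex_bij_betw[OF bij, of "\<lambda>i. of_bool (P i)"] by simp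
  moreover have "(\<Sum>i\<in>I. of_bool (P (p i)) + of_bool (P i) :: nat) =
      (\<Sum>i\<in>I. of_bool (P (p i) \<noteq> P i) + 2 * of_bool (P (p i) \<and> P i))"
    by (rule sum.cong) auto
  moreover have "(\<Sum>i\<in>I. of_bool (P (p i) \<noteq> P i) :: nat) = card {i \<in> I. P (p i) \<noteq> P i}"
  proof -
    have "{i \<in> I. P (p i) \<noteq> P i} = I \<inter> {i. P (p i) \<noteq> P i}" by blast
    then show ?thesis using fin by simp
  qed
  ultimately have "card {i \<in> I. P (p i) \<noteq> P i} + 2 * (\<Sum>i\<in>I. of_bool (P (p i) \<and> P i)) =
      (\<Sum>i\<in>I. of_bool (P i) :: nat) + (\<Sum>i\<in>I. of_bool (P i))"
    by (simp only: sum.distrib sum_distrib_left)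
  then show ?thesis by presburger
qed

lemma predecessor_list_edges:
  assumes "vs \<noteq> []" "set vs = I"
    and pred: "\<And>k. k < length vs \<Longrightarrow> p (vs ! (Suc k mod length vs)) = vs ! k"
  shows "{(p i, i) | i. i \<in> I} = {(vs ! k, vs ! (Suc k mod length vs)) | k. k < length vs}"
    and "p ` I = I"
proof -
  let ?n = "length vs"
  have next_in: "vs ! (Suc k mod ?n) \<in> I" for k
    using assms(1,2) by (metis nth_mem length_greater_0_conv mod_less_divisor)
  show "{(p i, i) | i. i \<in> I} = {(vs ! k, vs ! (Suc k mod ?n)) | k. k < ?n}"
  proof (intro set_eqI iffI)
    fix e assume "e \<in> {(p i, i) | i. i \<in> I}"
    then obtain i where i: "i \<in> I" "e = (p i, i)" by blast
    then obtain k where "k < ?n" "vs ! (Suc k mod ?n) = i"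
      using cyclic_predecessor[OF assms(1)] assms(2) by metis
    then show "e \<in> {(vs ! k, vs ! (Suc k mod ?n)) | k. k < ?n}" using pred i(2) by force
  next
    fix e assume "e \<in> {(vs ! k, vs ! (Suc k mod ?n)) | k. k < ?n}"
    then obtain k where k: "k < ?n" "e = (vs ! k, vs ! (Suc k mod ?n))" by blast
    then show "e \<in> {(p i, i) | i. i \<in> I}" using pred[OF k(1)] next_in by force
  qed
  show "p ` I = I"
  proof
    show "p ` I \<subseteq> I"
    proof
      fix j assume "j \<in> p ` I"
      then obtain i where "i \<in> I" "j = p i" by blast
      then obtain k where "k < ?n" "vs ! (Suc k mod ?n) = i"
        using cyclic_predecessor[OF assms(1)] assms(2) by metis
      then show "j \<in> I" using pred \<open>j = p i\<close> assms(2) by (metis nth_mem)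
    qed
    show "I \<subseteq> p ` I"
    proof
      fix i assume "i \<in> I"
      then obtain k where k: "k < ?n" "vs ! k = i" using assms(2) by (metis in_set_conv_nth)
      then show "i \<in> p ` I" using pred[OF k(1)] next_in[of k] by (metis image_eqI)
    qed
  qed
qed

lemma copy_cycle_positive_circular:
  fixes P :: "'v \<Rightarrow> bool"
  assumes fin: "finite I" and w0: "w0 \<in> I" and maps: "\<forall>i\<in>I. p i \<in> I"
    and reach: "\<forall>v\<in>I. \<forall>w\<in>I. \<exists>m. (p ^^ m) v = w"
    and copies: "\<And>y i. y \<in> conf I \<Longrightarrow> i \<in> I \<Longrightarrow> h y i = (y (p i) = (P (p i) = P i))"
  shows "positive_circular I h"
proof -
  note arcs =
    arcs_of_copy_network[where I = I and p = p and h = h and s = "\<lambda>i. P (p i) = P i", OF maps copies]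
  obtain vs where vs: "distinct vs" "vs \<noteq> []" "set vs = I"
    and pred: "\<And>k. k < length vs \<Longrightarrow> p (vs ! (Suc k mod length vs)) = vs ! k"
    using funpow_orbit_cycle_list[OF w0 maps reach] by blast
  note edges = predecessor_list_edges[OF vs(2,3) pred]
  have "{(j, i). pos_arc I h j i \<or> neg_arc I h j i} = {(p i, i) | i. i \<in> I}"
    using arcs by auto
  then have cycle: "{(j, i). pos_arc I h j i \<or> neg_arc I h j i} =
      {(vs ! k, vs ! (Suc k mod length vs)) | k. k < length vs}"
    using edges(1) by simp
  from edges(2) have "bij_betw p I I"
    unfolding bij_betw_def using eq_card_imp_inj_on[OF fin] by metis
  then have "even (card {i \<in> I. P (p i) \<noteq> P i})" by (rule even_card_sign_changes[OF fin])
  moreover have "{(j, i). neg_arc I h j i} = (\<lambda>i. (p i, i)) ` {i \<in> I. P (p i) \<noteq> P i}"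
    using arcs by auto
  moreover have "inj (\<lambda>i. (p i, i))" by (rule injI) simp
  ultimately have "even (card {(j, i). neg_arc I h j i})"
    by (simp add: card_image inj_on_subset[OF _ subset_UNIV])
  then show ?thesis
    unfolding positive_circular_def using arcs cycle vs by blast
qed

lemma subnet_value_of_complementary_pair:
  assumes an: "and_net V f" and pair: "fixed_pair V f I P Q" and comp: "\<forall>i\<in>I. Q i = (\<not> P i)"
    and single: "\<forall>i\<in>I. regulators V f I i = {p i}" and y: "y \<in> conf I" and i: "i \<in> I"
  shows "subnet V f I (\<lambda>j. if j \<in> I then False else P j) y i = (y (p i) = (P (p i) = P i))"
proof -
  define W where "W j = (if j \<in> I then y j else P j)" for j
  have "subnet V f I (\<lambda>j. if j \<in> I then False else P j) y i = f W i"
    unfolding subnet_def W_def using i by (simp add: if_distrib)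
  moreover have "W \<in> conf V" "\<forall>j. j \<notin> I \<longrightarrow> W j = P j"
    using y pair unfolding W_def conf_def fixed_pair_def by auto
  moreover have "p i \<in> I" using single regulators_subset[of V f I i] i by blast
  ultimately show ?thesis
    using fixed_pair_value[OF an pair comp i] single i unfolding W_def by auto
qed

lemma complementary_pair_positive_circular:
  assumes an: "and_net V f" and pair: "fixed_pair V f I P Q" and comp: "\<forall>i\<in>I. Q i = (\<not> P i)"
    and fin: "finite I" and "I \<noteq> {}" and single: "\<forall>i\<in>I. regulators V f I i = {p i}"
    and full: "\<forall>w\<in>I. spread (regulators V f I) I P w = I"
  shows "\<exists>z\<in>conf (V - I). positive_circular I (subnet V f I z)"
proof -
  let ?z = "\<lambda>j. if j \<in> I then False else P j"
  have "P \<in> conf V" using pair by (simp add: fixed_pair_def)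
  then have z: "?z \<in> conf (V - I)" unfolding conf_def by simp
  obtain w0 where w0: "w0 \<in> I" using \<open>I \<noteq> {}\<close> by blast
  have maps: "\<forall>i\<in>I. p i \<in> I" using single regulators_subset[of V f I] by auto
  have reach: "\<forall>v\<in>I. \<forall>w\<in>I. \<exists>m. (p ^^ m) v = w"
    using spread_reached_by_iteration[OF single, of _ P] full by simp
  have "positive_circular I (subnet V f I ?z)"
    by (rule copy_cycle_positive_circular[OF fin w0 maps reach])
      (rule subnet_value_of_complementary_pair[OF an pair comp single])
  then show ?thesis using z by blast
qed

lemma full_spreads_single_regulators:
  assumes an: "and_net V f" and pair: "fixed_pair V f I P Q" and comp: "\<forall>i\<in>I. Q i = (\<not> P i)"
    and fin: "finite I"
    and full_P: "\<forall>w\<in>I. spread (regulators V f I) I P w = I"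
    and full_Q: "\<forall>w\<in>I. spread (regulators V f I) I Q w = I"
  obtains p where "\<forall>i\<in>I. regulators V f I i = {p i}"
proof -
  have N: "\<forall>i\<in>I. regulators V f I i \<subseteq> I \<and> regulators V f I i \<noteq> {}"
    using regulators_subset[of V f I] regulators_nonempty[OF an pair comp] by simp
  have comp': "\<forall>i\<in>I. P i = (\<not> Q i)" using comp by simp
  have "\<exists>l. regulators V f I w = {l}" if w: "w \<in> I" for w
  proof (cases "P w")
    case False
    then show ?thesis
      using single_regulator_if_spreads_full[OF fin N comp w False] full_P full_Q w by simp
  next
    case True
    then have "\<not> Q w" using comp w by simp
    then show ?thesis
      using single_regulator_if_spreads_full[OF fin N comp' w] full_P full_Q w by simp
  qed
  then show ?thesis using that by metis
qed

lemma fixed_pair_positive_circular_subnet: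
  assumes an: "and_net V f" and finV: "finite V"
  shows "fixed_pair V f I P Q \<Longrightarrow> P \<noteq> Q \<Longrightarrow>
    \<exists>I' z. I' \<noteq> {} \<and> I' \<subseteq> V \<and> z \<in> conf (V - I') \<and> positive_circular I' (subnet V f I' z)"
proof (induction "card I" arbitrary: I P Q rule: less_induct)
  case less
  note pair = less.prems(1)
  have IV: "I \<subseteq> V" and agree_off: "\<forall>j. j \<notin> I \<longrightarrow> P j = Q j"
    using pair by (simp_all add: fixed_pair_def)
  have fin: "finite I" using IV finV by (rule finite_subset)
  have "I \<noteq> {}" using agree_off less.prems(2) by auto
  have shrink: ?case if "w \<in> I" "fixed_pair V f (I - {w}) P' Q'" "P' \<noteq> Q'" for w P' Q'
    using less.hyps[OF card_Diff1_less[OF fin that(1)] that(2,3)] .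
  show ?case
  proof (cases "\<exists>i\<in>I. P i = Q i")
    case True
    then obtain i where "i \<in> I" "P i = Q i" by blast
    then have "fixed_pair V f (I - {i}) P Q" using pair unfolding fixed_pair_def by auto
    then show ?thesis using shrink[OF \<open>i \<in> I\<close>] less.prems(2) by simp
  next
    case False
    then have comp: "\<forall>i\<in>I. Q i = (\<not> P i)" and comp': "\<forall>i\<in>I. P i = (\<not> Q i)" by auto
    consider w where "w \<in> I" "spread (regulators V f I) I P w \<noteq> I"
      | w where "w \<in> I" "spread (regulators V f I) I Q w \<noteq> I"
      | "\<forall>w\<in>I. spread (regulators V f I) I P w = I" "\<forall>w\<in>I. spread (regulators V f I) I Q w = I"
      by blast
    then show ?thesis
    proof cases
      case (1 w)
      then obtain W where "fixed_pair V f (I - {w}) P W" "P \<noteq> W"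
        using fixed_pair_shrink[OF an pair comp fin] by blast
      then show ?thesis using shrink[OF \<open>w \<in> I\<close>] by simp
    next
      case (2 w)
      then obtain W where "fixed_pair V f (I - {w}) Q W" "Q \<noteq> W"
        using fixed_pair_shrink[OF an fixed_pair_sym[OF pair] comp' fin] by blast
      then show ?thesis using shrink[OF \<open>w \<in> I\<close>] by simp
    next
      case 3
      then obtain p where "\<forall>i\<in>I. regulators V f I i = {p i}"
        using full_spreads_single_regulators[OF an pair comp fin] by blast
      then obtain z where "z \<in> conf (V - I)" "positive_circular I (subnet V f I z)"
        using complementary_pair_positive_circular[OF an pair comp fin \<open>I \<noteq> {}\<close>] 3(1) by blast
      then show ?thesis using IV \<open>I \<noteq> {}\<close> by blast
    qed
  qed
qed

lemma subnet_not_unique_fixed_point_fixed_pair: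
  assumes "I \<subseteq> V" "z \<in> conf (V - I)" "\<not> at_most_one_fixed_point I (subnet V f I z)"
  obtains P Q where "fixed_pair V f I P Q" "P \<noteq> Q"
proof -
  obtain x y where x: "x \<in> conf I" "\<forall>i\<in>I. subnet V f I z x i = x i"
    and y: "y \<in> conf I" "\<forall>i\<in>I. subnet V f I z y i = y i" and "x \<noteq> y"
    using assms(3) unfolding at_most_one_fixed_point_def by blast
  let ?P = "\<lambda>j. if j \<in> I then x j else z j" and ?Q = "\<lambda>j. if j \<in> I then y j else z j"
  have "fixed_pair V f I ?P ?Q"
    using assms(1,2) x y unfolding fixed_pair_def subnet_def conf_def by auto
  moreover have "?P \<noteq> ?Q"
  proof
    obtain j where j: "x j \<noteq> y j" using \<open>x \<noteq> y\<close> by blast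
    then have "j \<in> I" using x(1) y(1) unfolding conf_def by auto
    moreover assume "?P = ?Q"
    ultimately show False using j by (metis (full_types))
  qed
  ultimately show ?thesis using that by blast
qed

theorem corollary10:
  fixes V :: "'v set" and f :: "('v \<Rightarrow> bool) \<Rightarrow> ('v \<Rightarrow> bool)"
  assumes "finite V" and "V \<noteq> {}" and "and_net V f"
  shows "(\<forall>I z. I \<noteq> {} \<and> I \<subseteq> V \<and> z \<in> conf (V - I) \<longrightarrow>
             at_most_one_fixed_point I (subnet V f I z))
         \<longleftrightarrow>
         \<not> (\<exists>I z. I \<noteq> {} \<and> I \<subseteq> V \<and> z \<in> conf (V - I) \<and>
             positive_circular I (subnet V f I z))"
proof
  assume "\<forall>I z. I \<noteq> {} \<and> I \<subseteq> V \<and> z \<in> conf (V - I) \<longrightarrow>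
            at_most_one_fixed_point I (subnet V f I z)"
  then show "\<not> (\<exists>I z. I \<noteq> {} \<and> I \<subseteq> V \<and> z \<in> conf (V - I) \<and>
      positive_circular I (subnet V f I z))"
    using positive_circular_not_unique_fixed_point finite_subset[OF _ \<open>finite V\<close>] by blast
next
  assume no_positive_circular: "\<not> (\<exists>I z. I \<noteq> {} \<and> I \<subseteq> V \<and> z \<in> conf (V - I) \<and>
      positive_circular I (subnet V f I z))"
  show "\<forall>I z. I \<noteq> {} \<and> I \<subseteq> V \<and> z \<in> conf (V - I) \<longrightarrow>
      at_most_one_fixed_point I (subnet V f I z)"
  proof (intro allI impI, rule ccontr)
    fix I z
    assume "I \<noteq> {} \<and> I \<subseteq> V \<and> z \<in> conf (V - I)" "\<not> at_most_one_fixed_point I (subnet V f I z)"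
    then obtain P Q where "fixed_pair V f I P Q" "P \<noteq> Q"
      using subnet_not_unique_fixed_point_fixed_pair by blast
    then show False
      using fixed_pair_positive_circular_subnet[OF \<open>and_net V f\<close> \<open>finite V\<close>] no_positive_circular
      by blast
  qed
qed

end
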